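(* Under the hypotheses of the continuity-in-pretrained-model result (Assumption 1, the uniform Lipschitz condition $\|T^Y_0(x_1,y_1)-T^Y_0(x_2,y_2)\|_{\mathcal{Y}_T}\le L(\|x_1-x_2\|_{\mathcal{X}_T}+\|y_1-y_2\|_{\mathcal{Y}_S})$ for all $T^Y_0\in\mathbb{T}^Y_0$, and the bound $|\mathcal{E}^O(h_1)-\mathcal{E}^O(h_2)|\le L'\mathcal{W}_p(h_1\#Law(X_T),h_2\#Law(X_T))^p$ for all intermediate models $h_1,h_2$, for some $L'>0,p\ge1$), the transfer risk $S\mapsto\mathcal{C}(S)$ is continuous on the metric space $(\mathcal{S},d_S)$, where $d_S((\mu_1,f_1),(\mu_2,f_2))=D(\mu_1,\mu_2)+d_M(f_1,f_2)$.
   Context: Transfer learning framework. A source task $S$ consists of an input space $\mathcal{X}_S$ and output space $\mathcal{Y}_S$ (finite-dimensional normed spaces), a random pair $(X_S,Y_S)$, a set $A_S$ of admissible models $f:\mathcal{X}_S\to\mathcal{Y}_S$ and a pretrained model $f_S^*\in A_S$. A target task $T$ has analogous $\mathcal{X}_T,\mathcal{Y}_T,(X_T,Y_T),A_T$ and optimal target model $f_T^*$. Fixed sets $\mathbb{T}^X_0$ of maps $\mathcal{X}_T\to\mathcal{X}_S$ and $\mathbb{T}^Y_0$ of maps $\mathcal{X}_T\times\mathcal{Y}_S\to\mathcal{Y}_T$ are given. For $(T^X_0,T^Y_0)$ the intermediate model is $f_{ST}(x)=T^Y_0(x,f_S^*(T^X_0(x)))$; $\mathbb{P}_T=Law(f_T^*(X_T))$,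 $\mathbb{P}_{ST}=Law(f_{ST}(X_T))$. An output transport risk is $\mathcal{E}^O:A_T\to\mathbb{R}$ with $\mathcal{E}^O\ge0$ and $\mathcal{E}^O(f_{ST})=0$ iff $\mathbb{P}_{ST}=\mathbb{P}_T$. An input transport risk $\mathcal{E}^I$ satisfies $\mathcal{E}^I(T^X_0)\ge0$, with equality iff $T^X_0\#Law(X_T)=Law(X_S)$. The model-specific transfer risk is $\mathcal{C}(S,T\mid f_{ST})=C(\mathcal{E}^O(f_{ST}),\mathcal{E}^I(T^X_0))$, with $C:\mathbb{R}^2\to\mathbb{R}$, $C(0,0)=0$, $C\ge0$ on relevant values, non-decreasing in each argument, and $|C(a,b)-C(a',b')|\le L_C(|a-a'|+|b-b'|)$ for some $L_C>0$. The transfer risk is $\mathcal{C}(S,T)=\inf_{(T^X_0,T^Y_0)\in\mathbb{T}^X_0\times\mathbb{T}^Y_0}\mathcal{C}(S,T\mid f_{ST})$. With target and transport sets fixed, a source task is $S=(\mu,f)\in\mathcal{S}\subset\mathcal{P}(\mathcal{X}_S)\times A_S$ ($\mu=Law(X_S)$, $f=f_S^*$) and $\mathcal{C}(S)=\mathcal{C}(\mu,f):=\mathcal{C}(S,T)$. Assumption 1: $D$ is a metric on $\mathcal{P}(\mathcal{X}_S)$ and $\mathcal{E}^I(T^X_0)=D(T^X_0\#Law(X_T),\mu)$. For a fixed constant $M>0$, $d_M(f_1,f_2):=\min\{M,\sup_{x\in\mathcal{X}_S}\|f_1(x)-f_2(x)\|_{\mathcal{Y}_S}\}$. $\mathcal{W}_p$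 is the $p$-Wasserstein distance on probability measures on $\mathcal{Y}_T$. *)

theory Defs
  imports "HOL-Probability.Probability"
begin

definition prob_measures :: "'a::topological_space measure set" where
  "prob_measures = {\<mu>. prob_space \<mu> \<and> sets \<mu> = sets borel}"

definition metric_on :: "'a set \<Rightarrow> ('a \<Rightarrow> 'a \<Rightarrow> real) \<Rightarrow> bool" where
  "metric_on P D \<longleftrightarrow>
     (\<forall>x\<in>P. \<forall>y\<in>P. 0 \<le> D x y \<and> (D x y = 0 \<longleftrightarrow> x = y) \<and> D x y = D y x) \<and>
     (\<forall>x\<in>P. \<forall>y\<in>P. \<forall>z\<in>P. D x z \<le> D x y + D y z)"

definition couplings :: "'a::topological_space measure \<Rightarrow> 'b::topological_space measure
    \<Rightarrow> ('a \<times> 'b) measure set" where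
  "couplings P Q = {\<pi>. prob_space \<pi> \<and> sets \<pi> = sets borel \<and>
                       distr \<pi> borel fst = P \<and> distr \<pi> borel snd = Q}"

definition wasserstein_pow :: "real \<Rightarrow> 'a::metric_space measure \<Rightarrow> 'a measure \<Rightarrow> ennreal" where
  "wasserstein_pow p P Q =
     (INF \<pi>\<in>couplings P Q. \<integral>\<^sup>+ z. ennreal (dist (fst z) (snd z) powr p) \<partial>\<pi>)"

definition inter_model :: "('xt \<Rightarrow> 'ys \<Rightarrow> 'yt) \<Rightarrow> ('xs \<Rightarrow> 'ys) \<Rightarrow> ('xt \<Rightarrow> 'xs) \<Rightarrow> 'xt \<Rightarrow> 'yt" where
  "inter_model TY f TX = (\<lambda>x. TY x (f (TX x)))"

definition dM :: "real \<Rightarrow> ('a \<Rightarrow> 'b::real_normed_vector) \<Rightarrow> ('a \<Rightarrow> 'b) \<Rightarrow> real" where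
  "dM M f1 f2 = real_of_ereal (min (ereal M) (SUP x. ereal (norm (f1 x - f2 x))))"

text \<open>Transfer risk C(mu,f) under Assumption 1 (E^I(T^X_0) = D(T^X_0 # Law(X_T), mu)).\<close>
definition transfer_risk ::
  "(real \<Rightarrow> real \<Rightarrow> real) \<Rightarrow> (('xt \<Rightarrow> 'yt) \<Rightarrow> real) \<Rightarrow> ('xs::topological_space measure \<Rightarrow> 'xs measure \<Rightarrow> real)
   \<Rightarrow> 'xt::topological_space measure \<Rightarrow> ('xt \<Rightarrow> 'xs) set \<Rightarrow> ('xt \<Rightarrow> 'ys \<Rightarrow> 'yt) set
   \<Rightarrow> 'xs measure \<Rightarrow> ('xs \<Rightarrow> 'ys) \<Rightarrow> real" where
  "transfer_risk C EO D \<nu> TXs TYs \<mu> f =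
     (INF (tx, ty)\<in>TXs \<times> TYs. C (EO (inter_model ty f tx)) (D (distr \<nu> borel tx) \<mu>))"

definition continuous_wrt :: "'a set \<Rightarrow> ('a \<Rightarrow> 'a \<Rightarrow> real) \<Rightarrow> ('a \<Rightarrow> real) \<Rightarrow> bool" where
  "continuous_wrt S d F \<longleftrightarrow>
     (\<forall>s\<in>S. \<forall>e>0. \<exists>\<delta>>0. \<forall>s'\<in>S. d s s' < \<delta> \<longrightarrow> \<bar>F s' - F s\<bar> < e)"

end

theory Submission
  imports Defs
begin

text \<open>For a fixed pair of transport maps, replacing the pretrained model f by f' moves every
  intermediate model pointwise by at most |L| times the sup distance of f and f', so the
  p-Wasserstein cost between their output laws is at most (|L| d_M(f, f'))^p (use the
  coupling induced by the target input); the input transport risk moves by at most D(\<mu>, \<mu>')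
  by the triangle inequality. Lipschitz continuity of C turns this into a uniform bound on
  the change of the objective over all transport maps, which survives taking the infimum.
  The resulting modulus LC (L' (|L| t)^p + t) tends to 0 as t \<rightarrow> 0.\<close>

lemma metric_on_nonneg:
  "metric_on P D \<Longrightarrow> x \<in> P \<Longrightarrow> y \<in> P \<Longrightarrow> 0 \<le> D x y"
  unfolding metric_on_def by blast

lemma metric_on_abs_diff_le:
  assumes "metric_on P D" "x \<in> P" "y \<in> P" "z \<in> P"
  shows "\<bar>D z y - D z x\<bar> \<le> D x y"
proof -
  have "D z y \<le> D z x + D x y" "D z x \<le> D z y + D y x" "D y x = D x y"
    using assms unfolding metric_on_def by blast+
  then show ?thesis by linarith
qed

lemma distr_in_prob_measures:
  assumes "prob_space \<nu>" "sets \<nu> = sets borel" "g \<in> borel_measurable borel"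
  shows "distr \<nu> borel g \<in> prob_measures"
proof -
  have "g \<in> borel_measurable \<nu>"
    using assms(3) measurable_cong_sets[OF assms(2) refl] by blast
  then show ?thesis
    unfolding prob_measures_def using prob_space.prob_space_distr[OF assms(1)] by auto
qed

lemma dM_nonneg: "0 \<le> M \<Longrightarrow> 0 \<le> dM M f g"
proof -
  assume "0 \<le> M"
  moreover have "0 \<le> (SUP x. ereal (norm (f x - g x)))"
    by (rule order_trans[OF _ SUP_upper[of undefined]]) auto
  ultimately show ?thesis
    unfolding dM_def by (cases "SUP x. ereal (norm (f x - g x))") (auto simp: min_def)
qed

lemma norm_le_dM:
  fixes f g :: "'a \<Rightarrow> 'b::real_normed_vector"
  assumes "dM M f g < M"
  shows "norm (f x - g x) \<le> dM M f g"
proof -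
  define S where "S = (SUP x. ereal (norm (f x - g x)))"
  have "S < ereal M"
  proof (rule ccontr)
    assume "\<not> S < ereal M"
    then have "dM M f g = M" unfolding dM_def S_def[symmetric] by (simp add: min_def not_less)
    with assms show False by simp
  qed
  moreover have "ereal (norm (f x - g x)) \<le> S" unfolding S_def by (rule SUP_upper) simp
  ultimately obtain r where "S = ereal r" "norm (f x - g x) \<le> r"
    by (cases S) auto
  moreover from \<open>S < ereal M\<close> have "dM M f g = real_of_ereal S"
    unfolding dM_def S_def[symmetric] by (auto simp: min_def)
  ultimately show ?thesis by simp
qed

lemma borel_measurable_inter_model:
  fixes ty :: "'x::{real_normed_vector,second_countable_topology}
      \<Rightarrow> 'y::{real_normed_vector,second_countable_topology} \<Rightarrow> 'z::real_normed_vector"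
  assumes lip: "\<forall>x1 x2 y1 y2. norm (ty x1 y1 - ty x2 y2) \<le> L * (norm (x1 - x2) + norm (y1 - y2))"
    and "f \<in> borel_measurable borel" "tx \<in> borel_measurable borel"
  shows "inter_model ty f tx \<in> borel_measurable borel"
proof -
  have "(2 * \<bar>L\<bar>)-lipschitz_on UNIV (case_prod ty)"
  proof (rule lipschitz_onI)
    fix u v :: "'x \<times> 'y"
    have "dist (case_prod ty u) (case_prod ty v) \<le> L * (norm (fst u - fst v) + norm (snd u - snd v))"
      using lip by (cases u; cases v) (simp add: dist_norm)
    also have "\<dots> \<le> \<bar>L\<bar> * (dist u v + dist u v)"
      using dist_fst_le[of u v] dist_snd_le[of u v]
      by (intro order_trans[OF mult_right_mono mult_left_mono]) (auto simp: dist_norm)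
    finally show "dist (case_prod ty u) (case_prod ty v) \<le> 2 * \<bar>L\<bar> * dist u v" by simp
  qed simp
  then have "case_prod ty \<in> borel_measurable borel"
    by (intro borel_measurable_continuous_onI lipschitz_on_continuous_on)
  moreover have "(\<lambda>x. (x, f (tx x))) \<in> borel_measurable borel"
    using measurable_compose[OF assms(3,2)] by (intro borel_measurable_Pair) simp_all
  ultimately have "(\<lambda>x. case_prod ty (x, f (tx x))) \<in> borel_measurable borel"
    by (rule measurable_compose[rotated])
  then show ?thesis unfolding inter_model_def by simp
qed

lemma wasserstein_pow_distr_le:
  fixes h1 h2 :: "'a::topological_space \<Rightarrow> 'b::{metric_space,second_countable_topology}"
  assumes \<nu>: "prob_space \<nu>" "sets \<nu> = sets borel"
    and h: "h1 \<in> borel_measurable borel" "h2 \<in> borel_measurable borel"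
    and dist_le: "\<And>x. dist (h1 x) (h2 x) \<le> c" and "0 < p"
  shows "wasserstein_pow p (distr \<nu> borel h1) (distr \<nu> borel h2) \<le> ennreal (c powr p)"
proof -
  define \<phi> where "\<phi> = (\<lambda>x. (h1 x, h2 x))"
  have \<phi>: "\<phi> \<in> borel_measurable \<nu>"
    unfolding \<phi>_def using h measurable_cong_sets[OF \<nu>(2) refl]
    by (intro borel_measurable_Pair) auto
  have proj: "fst \<in> borel_measurable (borel :: ('b \<times> 'b) measure)"
    "snd \<in> borel_measurable (borel :: ('b \<times> 'b) measure)"
    by (auto intro!: borel_measurable_continuous_onI continuous_on_fst continuous_on_snd continuous_on_id)
  have cost: "(\<lambda>z::'b \<times> 'b. dist (fst z) (snd z) powr p) \<in> borel_measurable borel"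
    using proj by (intro powr_real_measurable borel_measurable_dist) auto
  have "distr \<nu> borel \<phi> \<in> couplings (distr \<nu> borel h1) (distr \<nu> borel h2)"
    unfolding couplings_def using prob_space.prob_space_distr[OF \<nu>(1) \<phi>] \<phi> proj
    by (simp add: distr_distr comp_def \<phi>_def)
  then have "wasserstein_pow p (distr \<nu> borel h1) (distr \<nu> borel h2)
      \<le> (\<integral>\<^sup>+ z. ennreal (dist (fst z) (snd z) powr p) \<partial>distr \<nu> borel \<phi>)"
    unfolding wasserstein_pow_def by (rule INF_lower)
  also have "\<dots> = (\<integral>\<^sup>+ x. ennreal (dist (h1 x) (h2 x) powr p) \<partial>\<nu>)"
    using \<phi> cost by (simp add: nn_integral_distr \<phi>_def)
  also have "\<dots> \<le> (\<integral>\<^sup>+ x. ennreal (c powr p) \<partial>\<nu>)"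
    using dist_le \<open>0 < p\<close> by (intro nn_integral_mono ennreal_leI powr_mono2) auto
  also have "\<dots> = ennreal (c powr p)"
    using prob_space.emeasure_space_1[OF \<nu>(1)] by simp
  finally show ?thesis .
qed

lemma dist_inter_model_le:
  assumes "\<forall>x1 x2 y1 y2. norm (ty x1 y1 - ty x2 y2) \<le> L * (norm (x1 - x2) + norm (y1 - y2))"
  shows "dist (inter_model ty f' tx x) (inter_model ty f tx x) \<le> \<bar>L\<bar> * norm (f' (tx x) - f (tx x))"
proof -
  have "dist (inter_model ty f' tx x) (inter_model ty f tx x) \<le> L * norm (f' (tx x) - f (tx x))"
    using assms unfolding inter_model_def dist_norm by (metis add_0 diff_self norm_zero)
  also have "\<dots> \<le> \<bar>L\<bar> * norm (f' (tx x) - f (tx x))" by (simp add: mult_right_mono)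
  finally show ?thesis .
qed

lemma abs_INF_diff_le:
  fixes g g' :: "'a \<Rightarrow> real"
  assumes "\<And>i. i \<in> I \<Longrightarrow> 0 \<le> g i" "\<And>i. i \<in> I \<Longrightarrow> 0 \<le> g' i"
    and "\<And>i. i \<in> I \<Longrightarrow> \<bar>g' i - g i\<bar> \<le> B" "0 \<le> B"
  shows "\<bar>(INF i\<in>I. g' i) - (INF i\<in>I. g i)\<bar> \<le> B"
proof (cases "I = {}")
  case False
  have bdd: "bdd_below (g ` I)" "bdd_below (g' ` I)"
    using assms(1,2) by (auto intro!: bdd_belowI2)
  have "(INF i\<in>I. g' i) - B \<le> (INF i\<in>I. g i)"
    using cINF_lower[OF bdd(2)] assms(3) by (intro cINF_greatest[OF False]) force
  moreover have "(INF i\<in>I. g i) - B \<le> (INF i\<in>I. g' i)"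
    using cINF_lower[OF bdd(1)] assms(3) by (intro cINF_greatest[OF False]) force
  ultimately show ?thesis by linarith
qed (use assms(4) in simp)

lemma continuous_wrt_modulus:
  fixes \<omega> :: "real \<Rightarrow> real"
  assumes bound: "\<And>s s'. s \<in> S \<Longrightarrow> s' \<in> S \<Longrightarrow> d s s' < r \<Longrightarrow> \<bar>F s' - F s\<bar> \<le> \<omega> (d s s')"
    and d_nonneg: "\<And>s s'. s \<in> S \<Longrightarrow> s' \<in> S \<Longrightarrow> 0 \<le> d s s'"
    and "0 < r" "\<omega> 0 = 0" "(\<omega> \<longlongrightarrow> 0) (at_right 0)"
  shows "continuous_wrt S d F"
  unfolding continuous_wrt_def
proof (intro ballI allI impI)
  fix s and e :: real assume "s \<in> S" "0 < e"
  with \<open>(\<omega> \<longlongrightarrow> 0) (at_right 0)\<close> have "\<forall>\<^sub>F t in at_right 0. dist (\<omega> t) 0 < e"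
    by (simp add: tendsto_iff)
  then obtain \<delta> where "0 < \<delta>" and \<delta>: "\<And>t. 0 < t \<Longrightarrow> t < \<delta> \<Longrightarrow> \<bar>\<omega> t\<bar> < e"
    unfolding eventually_at_right_field dist_real_def by auto
  have "\<bar>F s' - F s\<bar> < e" if "s' \<in> S" "d s s' < min \<delta> r" for s'
  proof -
    have "\<bar>F s' - F s\<bar> \<le> \<omega> (d s s')" using bound \<open>s \<in> S\<close> that by simp
    moreover have "\<omega> (d s s') < e"
      using \<delta>[of "d s s'"] d_nonneg[OF \<open>s \<in> S\<close> that(1)] that(2) \<open>\<omega> 0 = 0\<close> \<open>0 < e\<close>
      by (cases "d s s' = 0") auto
    ultimately show ?thesis by linarith
  qed
  then show "\<exists>\<delta>>0. \<forall>s'\<in>S. d s s' < \<delta> \<longrightarrow> \<bar>F s' - F s\<bar> < e"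
    using \<open>0 < \<delta>\<close> \<open>0 < r\<close> by (intro exI[of _ "min \<delta> r"]) auto
qed

lemma transfer_risk_abs_diff_le:
  fixes \<nu> :: "'xt::{real_normed_vector,second_countable_topology} measure"
    and f f' :: "'xs::{real_normed_vector,second_countable_topology}
                   \<Rightarrow> 'ys::{real_normed_vector,second_countable_topology}"
    and TYs :: "('xt \<Rightarrow> 'ys \<Rightarrow> 'yt::{real_normed_vector,second_countable_topology}) set"
    and C :: "real \<Rightarrow> real \<Rightarrow> real"
  assumes \<nu>: "prob_space \<nu>" "sets \<nu> = sets borel"
    and \<mu>: "\<mu> \<in> prob_measures" "\<mu>' \<in> prob_measures"
    and f: "f \<in> borel_measurable borel" "f' \<in> borel_measurable borel"
    and TX_meas: "\<And>tx. tx \<in> TXs \<Longrightarrow> tx \<in> borel_measurable borel"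
    and TY_lip: "\<And>ty. ty \<in> TYs \<Longrightarrow>
          \<forall>x1 x2 y1 y2. norm (ty x1 y1 - ty x2 y2) \<le> L * (norm (x1 - x2) + norm (y1 - y2))"
    and EO_nonneg: "\<And>tx ty. tx \<in> TXs \<Longrightarrow> ty \<in> TYs \<Longrightarrow>
          0 \<le> EO (inter_model ty f tx) \<and> 0 \<le> EO (inter_model ty f' tx)"
    and EO_W: "\<And>tx ty. tx \<in> TXs \<Longrightarrow> ty \<in> TYs \<Longrightarrow>
          ennreal \<bar>EO (inter_model ty f' tx) - EO (inter_model ty f tx)\<bar>
            \<le> ennreal L' * wasserstein_pow p (distr \<nu> borel (inter_model ty f' tx))
                                            (distr \<nu> borel (inter_model ty f tx))"
    and D: "metric_on prob_measures D"
    and C_nonneg: "\<And>a b. 0 \<le> a \<Longrightarrow> 0 \<le> b \<Longrightarrow> 0 \<le> C a b"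
    and C_lip: "\<And>a b a' b'. \<bar>C a b - C a' b'\<bar> \<le> LC * (\<bar>a - a'\<bar> + \<bar>b - b'\<bar>)"
    and "0 \<le> LC" "0 \<le> L'" "0 < p" "dM M f f' < M"
  shows "\<bar>transfer_risk C EO D \<nu> TXs TYs \<mu>' f' - transfer_risk C EO D \<nu> TXs TYs \<mu> f\<bar>
           \<le> LC * (L' * (\<bar>L\<bar> * dM M f f') powr p + D \<mu> \<mu>')"
proof -
  define c where "c = \<bar>L\<bar> * dM M f f'"
  let ?g = "\<lambda>(tx, ty). C (EO (inter_model ty f tx)) (D (distr \<nu> borel tx) \<mu>)"
  let ?g' = "\<lambda>(tx, ty). C (EO (inter_model ty f' tx)) (D (distr \<nu> borel tx) \<mu>')"
  have \<nu>_tx: "distr \<nu> borel tx \<in> prob_measures" if "tx \<in> TXs" for tx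
    using distr_in_prob_measures[OF \<nu> TX_meas[OF that]] .
  have g_nonneg: "0 \<le> ?g i" and g'_nonneg: "0 \<le> ?g' i" if "i \<in> TXs \<times> TYs" for i
  proof -
    from \<open>i \<in> TXs \<times> TYs\<close> obtain tx ty where i: "i = (tx, ty)" and tx: "tx \<in> TXs" and ty: "ty \<in> TYs"
      by auto
    show "0 \<le> ?g i" "0 \<le> ?g' i"
      unfolding i using EO_nonneg[OF tx ty] metric_on_nonneg[OF D \<nu>_tx[OF tx]] \<mu>
      by (simp_all add: C_nonneg)
  qed
  have diff_le: "\<bar>?g' i - ?g i\<bar> \<le> LC * (L' * c powr p + D \<mu> \<mu>')" if "i \<in> TXs \<times> TYs" for i
  proof -
    from \<open>i \<in> TXs \<times> TYs\<close> obtain tx ty where i: "i = (tx, ty)" and tx: "tx \<in> TXs" and ty: "ty \<in> TYs"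
      by auto
    have "dist (inter_model ty f' tx x) (inter_model ty f tx x) \<le> c" for x
      using dist_inter_model_le[OF TY_lip[OF ty]] norm_le_dM[OF \<open>dM M f f' < M\<close>, of "tx x"]
      unfolding c_def by (smt (verit) abs_ge_zero mult_left_mono norm_minus_commute)
    then have W: "wasserstein_pow p (distr \<nu> borel (inter_model ty f' tx))
                 (distr \<nu> borel (inter_model ty f tx)) \<le> ennreal (c powr p)"
      using TY_lip[OF ty] f TX_meas[OF tx] \<open>0 < p\<close>
      by (intro wasserstein_pow_distr_le \<nu> borel_measurable_inter_model) auto
    have "ennreal \<bar>EO (inter_model ty f' tx) - EO (inter_model ty f tx)\<bar>
            \<le> ennreal L' * ennreal (c powr p)"
      using order_trans[OF EO_W[OF tx ty] mult_left_mono[OF W zero_le]] .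
    also have "\<dots> = ennreal (L' * c powr p)"
      using \<open>0 \<le> L'\<close> by (simp add: ennreal_mult)
    finally have EO_le: "\<bar>EO (inter_model ty f' tx) - EO (inter_model ty f tx)\<bar> \<le> L' * c powr p"
      using \<open>0 \<le> L'\<close> by (simp add: ennreal_le_iff)
    have D_le: "\<bar>D (distr \<nu> borel tx) \<mu>' - D (distr \<nu> borel tx) \<mu>\<bar> \<le> D \<mu> \<mu>'"
      using metric_on_abs_diff_le[OF D \<mu> \<nu>_tx[OF tx]] .
    have "\<bar>?g' i - ?g i\<bar> \<le> LC * (\<bar>EO (inter_model ty f' tx) - EO (inter_model ty f tx)\<bar>
        + \<bar>D (distr \<nu> borel tx) \<mu>' - D (distr \<nu> borel tx) \<mu>\<bar>)"
      unfolding i using C_lip by simp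
    also have "\<dots> \<le> LC * (L' * c powr p + D \<mu> \<mu>')"
      using EO_le D_le \<open>0 \<le> LC\<close> by (intro mult_left_mono add_mono)
    finally show ?thesis .
  qed
  have "0 \<le> LC * (L' * c powr p + D \<mu> \<mu>')"
    using \<open>0 \<le> LC\<close> \<open>0 \<le> L'\<close> metric_on_nonneg[OF D \<mu>] by simp
  with g_nonneg g'_nonneg diff_le show ?thesis
    unfolding transfer_risk_def c_def by (rule abs_INF_diff_le)
qed

theorem mainTheorem4:
  fixes \<nu>T :: "'xt::{real_normed_vector, second_countable_topology} measure"
    and fT :: "'xt \<Rightarrow> 'yt::{real_normed_vector, second_countable_topology}"
    and AS :: "('xs::{real_normed_vector, second_countable_topology}
                 \<Rightarrow> 'ys::{real_normed_vector, second_countable_topology}) set"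
    and AT :: "('xt \<Rightarrow> 'yt) set"
    and SS :: "('xs measure \<times> ('xs \<Rightarrow> 'ys)) set"
    and TXs :: "('xt \<Rightarrow> 'xs) set"
    and TYs :: "('xt \<Rightarrow> 'ys \<Rightarrow> 'yt) set"
    and EO :: "('xt \<Rightarrow> 'yt) \<Rightarrow> real"
    and D :: "'xs measure \<Rightarrow> 'xs measure \<Rightarrow> real"
    and C :: "real \<Rightarrow> real \<Rightarrow> real"
    and LC L L' p M :: real
  assumes nuT: "prob_space \<nu>T" "sets \<nu>T = sets borel"
    and fT: "fT \<in> AT" "fT \<in> borel_measurable borel"
    and SS: "SS \<subseteq> prob_measures \<times> AS"
    and AS_meas: "\<forall>f\<in>AS. f \<in> borel_measurable borel"
    and TX_meas: "\<forall>tx\<in>TXs. tx \<in> borel_measurable borel"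
    and inter_AT: "\<forall>\<mu> f tx ty. (\<mu>, f) \<in> SS \<longrightarrow> tx \<in> TXs \<longrightarrow> ty \<in> TYs \<longrightarrow> inter_model ty f tx \<in> AT"
    and EO_nonneg: "\<forall>h\<in>AT. 0 \<le> EO h"
    and EO_zero: "\<forall>\<mu> f tx ty. (\<mu>, f) \<in> SS \<longrightarrow> tx \<in> TXs \<longrightarrow> ty \<in> TYs \<longrightarrow>
          (EO (inter_model ty f tx) = 0 \<longleftrightarrow> distr \<nu>T borel (inter_model ty f tx) = distr \<nu>T borel fT)"
    and D_metric: "metric_on prob_measures D"
    and C00: "C 0 0 = 0"
    and C_nonneg: "\<forall>a b. 0 \<le> a \<longrightarrow> 0 \<le> b \<longrightarrow> 0 \<le> C a b"
    and C_mono1: "\<forall>a a' b. a \<le> a' \<longrightarrow> C a b \<le> C a' b"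
    and C_mono2: "\<forall>a b b'. b \<le> b' \<longrightarrow> C a b \<le> C a b'"
    and LC: "LC > 0"
    and C_lip: "\<forall>a b a' b'. \<bar>C a b - C a' b'\<bar> \<le> LC * (\<bar>a - a'\<bar> + \<bar>b - b'\<bar>)"
    and M: "M > 0"
    and TY_lip: "\<forall>ty\<in>TYs. \<forall>x1 x2 y1 y2.
          norm (ty x1 y1 - ty x2 y2) \<le> L * (norm (x1 - x2) + norm (y1 - y2))"
    and L': "L' > 0"
    and p: "p \<ge> 1"
    and EO_W: "\<forall>\<mu>1 f1 \<mu>2 f2 tx1 tx2 ty1 ty2.
          (\<mu>1, f1) \<in> SS \<longrightarrow> (\<mu>2, f2) \<in> SS \<longrightarrow> tx1 \<in> TXs \<longrightarrow> tx2 \<in> TXs \<longrightarrow>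
          ty1 \<in> TYs \<longrightarrow> ty2 \<in> TYs \<longrightarrow>
          ennreal \<bar>EO (inter_model ty1 f1 tx1) - EO (inter_model ty2 f2 tx2)\<bar>
            \<le> ennreal L' * wasserstein_pow p (distr \<nu>T borel (inter_model ty1 f1 tx1))
                                            (distr \<nu>T borel (inter_model ty2 f2 tx2))"
  shows "continuous_wrt SS (\<lambda>(\<mu>1, f1) (\<mu>2, f2). D \<mu>1 \<mu>2 + dM M f1 f2)
           (\<lambda>(\<mu>, f). transfer_risk C EO D \<nu>T TXs TYs \<mu> f)"
proof -
  define \<omega> where "\<omega> t = LC * (L' * (\<bar>L\<bar> * t) powr p + t)" for t
  have SS_mem: "\<mu> \<in> prob_measures" "f \<in> AS" if "(\<mu>, f) \<in> SS" for \<mu> f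
    using subsetD[OF SS that] by simp_all
  have D_nonneg: "0 \<le> D \<mu> \<mu>'" if "(\<mu>, f) \<in> SS" "(\<mu>', f') \<in> SS" for \<mu> f \<mu>' f'
    using metric_on_nonneg[OF D_metric SS_mem(1)[OF that(1)] SS_mem(1)[OF that(2)]] .
  have risk_le: "\<bar>transfer_risk C EO D \<nu>T TXs TYs \<mu>' f' - transfer_risk C EO D \<nu>T TXs TYs \<mu> f\<bar>
      \<le> \<omega> (D \<mu> \<mu>' + dM M f f')"
    if s: "(\<mu>, f) \<in> SS" "(\<mu>', f') \<in> SS" and close: "D \<mu> \<mu>' + dM M f f' < M" for \<mu> f \<mu>' f'
  proof -
    have "0 \<le> dM M f f'" using dM_nonneg[OF less_imp_le[OF M]] .
    then have dM_less: "dM M f f' < M" using close D_nonneg[OF s] by linarith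
    have f_meas: "f \<in> borel_measurable borel" "f' \<in> borel_measurable borel"
      using AS_meas SS_mem(2)[OF s(1)] SS_mem(2)[OF s(2)] by blast+
    have "\<bar>transfer_risk C EO D \<nu>T TXs TYs \<mu>' f' - transfer_risk C EO D \<nu>T TXs TYs \<mu> f\<bar>
        \<le> LC * (L' * (\<bar>L\<bar> * dM M f f') powr p + D \<mu> \<mu>')"
    proof (rule transfer_risk_abs_diff_le[OF nuT SS_mem(1)[OF s(1)] SS_mem(1)[OF s(2)] f_meas
          bspec[OF TX_meas] bspec[OF TY_lip] _ _ D_metric C_nonneg[rule_format] C_lip[rule_format]
          less_imp_le[OF LC] less_imp_le[OF L'] _ dM_less])
      show "0 < p" using p by simp
      show "0 \<le> EO (inter_model ty f tx) \<and> 0 \<le> EO (inter_model ty f' tx)"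
        if "tx \<in> TXs" "ty \<in> TYs" for tx ty
        using EO_nonneg inter_AT[rule_format, OF s(1) that] inter_AT[rule_format, OF s(2) that] by blast
      show "ennreal \<bar>EO (inter_model ty f' tx) - EO (inter_model ty f tx)\<bar>
          \<le> ennreal L' * wasserstein_pow p (distr \<nu>T borel (inter_model ty f' tx))
                                          (distr \<nu>T borel (inter_model ty f tx))"
        if "tx \<in> TXs" "ty \<in> TYs" for tx ty
        using EO_W[rule_format, OF s(2) s(1) that(1) that(1) that(2) that(2)] .
    qed
    also have "\<dots> \<le> \<omega> (D \<mu> \<mu>' + dM M f f')"
    proof -
      have "(\<bar>L\<bar> * dM M f f') powr p \<le> (\<bar>L\<bar> * (D \<mu> \<mu>' + dM M f f')) powr p"
        using \<open>0 \<le> dM M f f'\<close> D_nonneg[OF s] p by (intro powr_mono2 mult_left_mono) auto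
      then show ?thesis
        unfolding \<omega>_def using \<open>0 \<le> dM M f f'\<close> LC L' by (intro mult_left_mono add_mono) auto
    qed
    finally show ?thesis .
  qed
  have d_nonneg: "0 \<le> D \<mu> \<mu>' + dM M f f'" if "(\<mu>, f) \<in> SS" "(\<mu>', f') \<in> SS" for \<mu> f \<mu>' f'
    using D_nonneg[OF that] dM_nonneg[OF less_imp_le[OF M], of f f'] by linarith
  show ?thesis
  proof (rule continuous_wrt_modulus[where r = M and \<omega> = \<omega>], goal_cases)
    case (1 s s')
    then show ?case using risk_le by (cases s; cases s') simp
  next
    case (2 s s')
    then show ?case using d_nonneg by (cases s; cases s') simp
  next
    case 5
    show ?case
      unfolding \<omega>_def using p
      by (auto intro!: tendsto_eq_intros tendsto_zero_powrI eventually_at_rightI[of 0 1])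
  qed (simp_all add: M \<omega>_def)
qed

end
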